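(* Let $\mathcal{X}$ be a finite-dimensional complex Euclidean space, $\varepsilon\in[0,1]$, and let $\mathcal{P}=\{P_0^i\}_{i\in\Lambda},\ \mathcal{Q}=\{P_1^j\}_{j\in\Sigma}\subset\mathrm{Pos}(\mathcal{X})$ be finite sets. Consider the primal problem $\text{minimize } \gamma \text{ subject to } \langle X,P_0^i\rangle\ge 1-\varepsilon\ \forall i\in\Lambda,\ \langle X,P_1^j\rangle\le\gamma\ \forall j\in\Sigma,\ X\preceq\mathbb{1},\ \gamma\ge 0,\ X\in\mathrm{Pos}(\mathcal{X}),$ and the dual problem $\text{maximize } (1-\varepsilon)\|\mathbf{z}\|_1-\mathrm{Tr}(Z) \text{ subject to } \sum_{i\in\Lambda} z_iP_0^i-\sum_{j\in\Sigma}v_jP_1^j\preceq Z,\ \sum_{j\in\Sigma}v_j\le 1,\ v_j\ge 0\ \forall j,\ \mathbf{z}=(z_i)_{i\in\Lambda}\ge 0,\ Z\succeq 0,$ with $Z$ Hermitian on $\mathcal{X}$. Then strong duality holds: the optimal values of the two problems are equal (and the optimum is attained in the primal problem).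
   Context: $\mathrm{Pos}(\mathcal{X})$ is the set of positive semidefinite operators on $\mathcal{X}$; $\langle A,B\rangle=\mathrm{Tr}(A^{*}B)$; $\preceq$ is the Loewner order. *)

theory Defs
  imports "HOL-Analysis.Analysis"
begin

text \<open>Operators on the finite-dimensional complex Euclidean space X = complex^'n
  are represented as complex matrices indexed by the finite type 'n.\<close>

definition cadj :: "complex^'n^'n \<Rightarrow> complex^'n^'n" where
  "cadj A = (\<chi> i j. cnj (A $ j $ i))"

definition hermitian :: "complex^'n^'n \<Rightarrow> bool" where
  "hermitian A \<longleftrightarrow> cadj A = A"

definition ctrace :: "complex^'n^'n \<Rightarrow> complex" where
  "ctrace A = (\<Sum>i\<in>UNIV. A $ i $ i)"

definition hs_inner :: "complex^'n^'n \<Rightarrow> complex^'n^'n \<Rightarrow> complex" where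
  "hs_inner A B = ctrace (cadj A ** B)"

definition psd :: "complex^'n^'n \<Rightarrow> bool" where
  "psd A \<longleftrightarrow> hermitian A \<and> (\<forall>x::complex^'n. 0 \<le> Re (\<Sum>i\<in>UNIV. cnj (x $ i) * (A *v x) $ i))"

definition loewner_le :: "complex^'n^'n \<Rightarrow> complex^'n^'n \<Rightarrow> bool" where
  "loewner_le A B \<longleftrightarrow> psd (B - A)"

definition primal_feasible ::
  "real \<Rightarrow> 'a set \<Rightarrow> ('a \<Rightarrow> complex^'n^'n) \<Rightarrow> 'b set \<Rightarrow> ('b \<Rightarrow> complex^'n^'n)
   \<Rightarrow> complex^'n^'n \<Rightarrow> real \<Rightarrow> bool" where
  "primal_feasible \<epsilon> \<Lambda> P0 \<Sigma> P1 X \<gamma> \<longleftrightarrow>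
     (\<forall>i\<in>\<Lambda>. Re (hs_inner X (P0 i)) \<ge> 1 - \<epsilon>) \<and>
     (\<forall>j\<in>\<Sigma>. Re (hs_inner X (P1 j)) \<le> \<gamma>) \<and>
     loewner_le X (mat 1) \<and> \<gamma> \<ge> 0 \<and> psd X"

definition dual_feasible ::
  "'a set \<Rightarrow> ('a \<Rightarrow> complex^'n^'n) \<Rightarrow> 'b set \<Rightarrow> ('b \<Rightarrow> complex^'n^'n)
   \<Rightarrow> ('a \<Rightarrow> real) \<Rightarrow> ('b \<Rightarrow> real) \<Rightarrow> complex^'n^'n \<Rightarrow> bool" where
  "dual_feasible \<Lambda> P0 \<Sigma> P1 z v Z \<longleftrightarrow>
     loewner_le ((\<Sum>i\<in>\<Lambda>. z i *\<^sub>R P0 i) - (\<Sum>j\<in>\<Sigma>. v j *\<^sub>R P1 j)) Z \<and>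
     (\<Sum>j\<in>\<Sigma>. v j) \<le> 1 \<and> (\<forall>j\<in>\<Sigma>. v j \<ge> 0) \<and> (\<forall>i\<in>\<Lambda>. z i \<ge> 0) \<and>
     psd Z \<and> hermitian Z"

definition dual_objective ::
  "real \<Rightarrow> 'a set \<Rightarrow> ('a \<Rightarrow> real) \<Rightarrow> complex^'n^'n \<Rightarrow> real" where
  "dual_objective \<epsilon> \<Lambda> z Z = (1 - \<epsilon>) * (\<Sum>i\<in>\<Lambda>. \<bar>z i\<bar>) - Re (ctrace Z)"

text \<open>Optimal values as extended reals (Inf of empty set = +\<infinity>).\<close>
definition primal_value ::
  "real \<Rightarrow> 'a set \<Rightarrow> ('a \<Rightarrow> complex^'n^'n) \<Rightarrow> 'b set \<Rightarrow> ('b \<Rightarrow> complex^'n^'n) \<Rightarrow> ereal" where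
  "primal_value \<epsilon> \<Lambda> P0 \<Sigma> P1 =
     (INF p \<in> {(X, \<gamma>). primal_feasible \<epsilon> \<Lambda> P0 \<Sigma> P1 X \<gamma>}. ereal (snd p))"

definition dual_value ::
  "real \<Rightarrow> 'a set \<Rightarrow> ('a \<Rightarrow> complex^'n^'n) \<Rightarrow> 'b set \<Rightarrow> ('b \<Rightarrow> complex^'n^'n) \<Rightarrow> ereal" where
  "dual_value \<epsilon> \<Lambda> P0 \<Sigma> P1 =
     (SUP d \<in> {(z, v, Z). dual_feasible \<Lambda> P0 \<Sigma> P1 z v Z}.
        ereal (dual_objective \<epsilon> \<Lambda> (fst d) (snd (snd d))))"

end

theory Submission
  imports Defs
begin

text \<open>
  Weak duality is the Lagrangian inequality, which rests on \<open>\<langle>A, B\<rangle> \<ge> 0\<close> for positive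
  semidefinite \<open>A\<close>, \<open>B\<close>; this holds because every psd matrix is a sum of rank-one matrices
  \<open>b b\<^sup>*\<close>, split off one pivot at a time by Schur complements.

  For the converse, suppose every dual feasible point has objective below \<open>d\<close>. Then \<open>0\<close> lies
  outside the convex set of perturbations \<open>(\<alpha>, Y, \<beta>)\<close> of the dual constraints under which
  objective \<open>d + \<alpha>\<close> becomes reachable, so some nonzero functional \<open>(l, X, m)\<close> is \<open>\<le> 0\<close> on
  that set. Testing it on rays of perturbations and of dual points shows \<open>l, m \<ge> 0\<close>,
  \<open>0 \<preceq> X \<preceq> l\<close>, \<open>\<langle>X, P\<^sub>0\<^sup>i\<rangle> \<ge> l (1 - \<epsilon>)\<close>, \<open>\<langle>X, P\<^sub>1\<^sup>j\<rangle> \<le> m \<le> l d\<close>, and \<open>l > 0\<close> (else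
  \<open>m = 0\<close> and, testing with \<open>Z = X\<close>, \<open>X = 0\<close>). So \<open>(X / l, m / l)\<close> is primal feasible
  with value at most \<open>d\<close>, and no constraint qualification is needed.

  The primal optimum is attained since \<open>0 \<preceq> X \<preceq> 1\<close> bounds \<open>X\<close>, which makes the feasible
  points with bounded \<open>\<gamma>\<close> a compact set.
\<close>

section \<open>Hermitian and positive semidefinite matrices\<close>

definition sesq_form :: "complex^'n^'n \<Rightarrow> complex^'n \<Rightarrow> complex^'n \<Rightarrow> complex" where
  "sesq_form A x y = (\<Sum>i\<in>UNIV. \<Sum>j\<in>UNIV. cnj (x$i) * A$i$j * y$j)"

definition outer_prod :: "complex^'n \<Rightarrow> complex^'n^'n" where
  "outer_prod x = (\<chi> i j. x$i * cnj (x$j))"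

definition herm_part :: "complex^'n^'n \<Rightarrow> complex^'n^'n" where
  "herm_part A = (1/2) *\<^sub>R (A + cadj A)"

lemma cadj_nth [simp]: "cadj A $ i $ j = cnj (A $ j $ i)"
  by (simp add: cadj_def)

lemma cadj_add [simp]: "cadj (A + B) = cadj A + cadj B"
  and cadj_diff [simp]: "cadj (A - B) = cadj A - cadj B"
  and cadj_scaleR [simp]: "cadj (r *\<^sub>R A) = r *\<^sub>R cadj A"
  and cadj_zero [simp]: "cadj 0 = 0"
  and cadj_cadj [simp]: "cadj (cadj A) = A"
  and cadj_mat_1 [simp]: "cadj (mat 1) = mat 1"
  and cadj_outer_prod [simp]: "cadj (outer_prod x) = outer_prod x"
  by (simp_all add: vec_eq_iff mat_def outer_prod_def)

lemma cadj_sum: "cadj (\<Sum>i\<in>S. f i) = (\<Sum>i\<in>S. cadj (f i))"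
  by (induction S rule: infinite_finite_induct) simp_all

lemma inner_cadj_cadj [simp]: "inner (cadj A) (cadj B) = inner A B"
  unfolding inner_vec_def by (subst sum.swap) (simp add: inner_complex_def)

lemma bounded_linear_cadj: "bounded_linear cadj"
  unfolding linear_conv_bounded_linear[symmetric] by (rule linearI) simp_all

lemma hermitian_cnj_nth: "hermitian A \<Longrightarrow> cnj (A$j$i) = A$i$j"
  by (metis cadj_nth hermitian_def)

lemma hermitian_add: "hermitian A \<Longrightarrow> hermitian B \<Longrightarrow> hermitian (A + B)"
  and hermitian_diff: "hermitian A \<Longrightarrow> hermitian B \<Longrightarrow> hermitian (A - B)"
  and hermitian_scaleR: "hermitian A \<Longrightarrow> hermitian (r *\<^sub>R A)"
  and hermitian_zero: "hermitian 0"
  and hermitian_mat_1: "hermitian (mat 1)"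
  and hermitian_outer_prod: "hermitian (outer_prod x)"
  by (simp_all add: hermitian_def)

lemma hermitian_sum: "(\<And>i. i \<in> S \<Longrightarrow> hermitian (f i)) \<Longrightarrow> hermitian (\<Sum>i\<in>S. f i)"
  by (simp add: hermitian_def cadj_sum)

lemma herm_part_hermitian: "hermitian A \<Longrightarrow> herm_part A = A"
  by (simp add: hermitian_def herm_part_def)

lemma herm_part_add: "herm_part (A + B) = herm_part A + herm_part B"
  and herm_part_scaleR: "herm_part (r *\<^sub>R A) = r *\<^sub>R herm_part A"
  and herm_part_zero: "herm_part 0 = 0"
  by (simp_all add: herm_part_def algebra_simps)

lemma hermitian_diag_real: "hermitian A \<Longrightarrow> A$k$k = of_real (Re (A$k$k))"
proof -
  assume "hermitian A"
  then have "A$k$k = cnj (A$k$k)" by (rule hermitian_cnj_nth[symmetric])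
  then have "Im (A$k$k) = Im (cnj (A$k$k))" by (rule arg_cong)
  then show ?thesis by (simp add: complex_eq_iff)
qed

lemma affine_nonpos_imp_slope_nonpos:
  fixes c q :: real
  assumes "\<And>t. 0 \<le> t \<Longrightarrow> c + t * q \<le> 0"
  shows "q \<le> 0"
proof (rule ccontr)
  assume "\<not> q \<le> 0"
  then have "0 < q" by simp
  then have "c + ((\<bar>c\<bar> + 1) / q) * q \<le> 0" by (intro assms) simp
  with \<open>0 < q\<close> show False by simp
qed

lemma sesq_form_add_left: "sesq_form A (x + y) z = sesq_form A x z + sesq_form A y z"
  and sesq_form_add_right: "sesq_form A x (y + z) = sesq_form A x y + sesq_form A x z"
  and sesq_form_diff_matrix: "sesq_form (A - B) x y = sesq_form A x y - sesq_form B x y"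
  by (simp_all add: sesq_form_def algebra_simps sum.distrib sum_subtractf)

lemma sesq_form_scaleR_matrix: "sesq_form (r *\<^sub>R A) x y = of_real r * sesq_form A x y"
  by (simp add: sesq_form_def scaleR_conv_of_real[where 'a=complex] sum_distrib_left
      algebra_simps)

lemma matrix_vector_mult_axis_nth: "(A *v axis l c) $ k = A$k$l * c"
  by (simp add: matrix_vector_mult_def axis_def if_distrib cong: if_cong)

lemma sesq_form_axis_left: "sesq_form A (axis k c) y = cnj c * (A *v y) $ k"
proof -
  have "sesq_form A (axis k c) y =
      (\<Sum>i\<in>UNIV. if i = k then cnj c * (\<Sum>j\<in>UNIV. A$k$j * y$j) else 0)"
    unfolding sesq_form_def by (rule sum.cong) (auto simp: axis_def sum_distrib_left mult.assoc)
  then show ?thesis by (simp add: matrix_vector_mult_def)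
qed

lemma sesq_form_hermitian_swap: "hermitian A \<Longrightarrow> sesq_form A x y = cnj (sesq_form A y x)"
  unfolding sesq_form_def
  by (subst sum.swap) (simp add: hermitian_cnj_nth mult.commute mult.left_commute)

lemma Re_sesq_form_add_axis:
  assumes "hermitian A"
  shows "Re (sesq_form A (x + axis k c) (x + axis k c)) =
    Re (sesq_form A x x) + (cmod c)\<^sup>2 * Re (A$k$k) + 2 * Re (cnj c * (A *v x) $ k)"
proof -
  have "sesq_form A (axis k c) (axis k c) = A$k$k * of_real ((cmod c)\<^sup>2)"
    unfolding sesq_form_axis_left matrix_vector_mult_axis_nth complex_norm_square
    by (simp add: ac_simps)
  then have "Re (sesq_form A (axis k c) (axis k c)) = (cmod c)\<^sup>2 * Re (A$k$k)"
    by simp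
  moreover have "Re (sesq_form A x (axis k c)) = Re (sesq_form A (axis k c) x)"
    using sesq_form_hermitian_swap[OF assms, of x "axis k c"] by simp
  ultimately show ?thesis
    by (simp add: sesq_form_add_left sesq_form_add_right sesq_form_axis_left)
qed

lemma sesq_form_outer_prod_self:
  "sesq_form (outer_prod b) x x = of_real ((cmod (\<Sum>j\<in>UNIV. cnj (b$j) * x$j))\<^sup>2)"
proof -
  let ?w = "\<Sum>j\<in>UNIV. cnj (b$j) * x$j"
  have "sesq_form (outer_prod b) x x = (\<Sum>i\<in>UNIV. cnj (x$i) * b$i) * ?w"
    unfolding sesq_form_def outer_prod_def sum_product by (simp add: algebra_simps)
  also have "(\<Sum>i\<in>UNIV. cnj (x$i) * b$i) = cnj ?w"
    by (simp add: cnj_sum mult.commute)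
  also have "cnj ?w * ?w = of_real ((cmod ?w)\<^sup>2)"
    unfolding complex_norm_square by (rule mult.commute)
  finally show ?thesis .
qed

lemma inner_outer_prod_left: "inner (outer_prod x) A = Re (sesq_form A x x)"
  by (simp add: outer_prod_def sesq_form_def inner_vec_def inner_complex_def Re_sum
      algebra_simps)

lemma psd_iff_sesq_form: "psd A \<longleftrightarrow> hermitian A \<and> (\<forall>x. 0 \<le> Re (sesq_form A x x))"
proof -
  have "(\<Sum>i\<in>UNIV. cnj (x $ i) * (A *v x) $ i) = sesq_form A x x" for x
    by (simp add: sesq_form_def matrix_vector_mult_def sum_distrib_left mult.assoc)
  then show ?thesis by (simp add: psd_def)
qed

lemma psd_iff_inner_outer_prod: "psd A \<longleftrightarrow> hermitian A \<and> (\<forall>x. 0 \<le> inner (outer_prod x) A)"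
  by (simp add: psd_iff_sesq_form inner_outer_prod_left)

lemma psd_hermitian: "psd A \<Longrightarrow> hermitian A"
  by (simp add: psd_def)

lemma psd_add: "psd A \<Longrightarrow> psd B \<Longrightarrow> psd (A + B)"
  and psd_scaleR: "psd A \<Longrightarrow> 0 \<le> r \<Longrightarrow> psd (r *\<^sub>R A)"
  and psd_zero: "psd 0"
  by (simp_all add: psd_iff_inner_outer_prod hermitian_add hermitian_scaleR hermitian_zero
      inner_add_right)

lemma psd_outer_prod: "psd (outer_prod b)"
  by (simp add: psd_iff_sesq_form sesq_form_outer_prod_self hermitian_outer_prod)

lemma psd_diag_nonneg: "psd A \<Longrightarrow> 0 \<le> Re (A$k$k)"
  using psd_iff_sesq_form[of A, THEN iffD1, THEN conjunct2, rule_format, of "axis k 1"]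
  by (simp add: sesq_form_axis_left matrix_vector_mult_axis_nth)

lemma psd_zero_diag_imp_zero_row:
  assumes "psd A" "A$k$k = 0"
  shows "A$k$j = 0"
proof -
  have herm: "hermitian A" using assms(1) by (rule psd_hermitian)
  have "- Re (A$j$j) + t * (2 * (cmod (A$k$j))\<^sup>2) \<le> 0" if "0 \<le> t" for t
  proof -
    define c where "c = - (of_real t * A$k$j)"
    have "cnj c * A$k$j = - (of_real t * of_real ((cmod (A$k$j))\<^sup>2))"
      unfolding c_def complex_norm_square by (simp add: algebra_simps)
    have "0 \<le> Re (sesq_form A (axis j 1 + axis k c) (axis j 1 + axis k c))"
      using assms(1) by (simp add: psd_iff_sesq_form)
    also have "\<dots> = Re (A$j$j) - t * (2 * (cmod (A$k$j))\<^sup>2)"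
      by (simp add: Re_sesq_form_add_axis[OF herm] assms(2) sesq_form_axis_left
          matrix_vector_mult_axis_nth \<open>cnj c * A$k$j = _\<close>)
    finally show ?thesis by simp
  qed
  then have "2 * (cmod (A$k$j))\<^sup>2 \<le> 0" by (rule affine_nonpos_imp_slope_nonpos)
  then show ?thesis by simp
qed

lemma psd_schur_complement:
  assumes "psd A" "0 < Re (A$k$k)"
  shows "psd (A - (1 / Re (A$k$k)) *\<^sub>R outer_prod (column k A))"
proof -
  define \<beta> where "\<beta> = Re (A$k$k)"
  have herm: "hermitian A" using assms(1) by (rule psd_hermitian)
  have "0 < \<beta>" using assms(2) by (simp add: \<beta>_def)
  have "0 \<le> Re (sesq_form (A - (1 / \<beta>) *\<^sub>R outer_prod (column k A)) x x)" for x
  proof -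
    define w where "w = (A *v x) $ k"
    have w: "(\<Sum>j\<in>UNIV. cnj (column k A $ j) * x$j) = w"
      using herm by (simp add: w_def column_def matrix_vector_mult_def hermitian_cnj_nth)
    \<comment> \<open>shifting \<open>x\<close> along the \<open>k\<close>-th axis to the minimiser of the quadratic form\<close>
    define c where "c = - (w / of_real \<beta>)"
    have "cnj c * w = - of_real ((cmod w)\<^sup>2 / \<beta>)"
      unfolding c_def of_real_divide complex_norm_square by (simp add: mult.commute)
    have "0 \<le> Re (sesq_form A (x + axis k c) (x + axis k c))"
      using assms(1) by (simp add: psd_iff_sesq_form)
    also have "\<dots> = Re (sesq_form A x x) + (cmod w)\<^sup>2 / \<beta> - 2 * ((cmod w)\<^sup>2 / \<beta>)"
      using \<open>0 < \<beta>\<close>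
      by (simp add: Re_sesq_form_add_axis[OF herm] \<open>cnj c * w = _\<close> w_def[symmetric])
        (simp add: c_def norm_divide power_divide \<beta>_def[symmetric] power2_eq_square)
    also have "\<dots> = Re (sesq_form (A - (1 / \<beta>) *\<^sub>R outer_prod (column k A)) x x)"
      by (simp add: sesq_form_diff_matrix sesq_form_scaleR_matrix sesq_form_outer_prod_self w)
    finally show ?thesis .
  qed
  moreover have "hermitian (A - (1 / \<beta>) *\<^sub>R outer_prod (column k A))"
    by (intro hermitian_diff herm hermitian_scaleR hermitian_outer_prod)
  ultimately show ?thesis by (simp add: psd_iff_sesq_form \<beta>_def)
qed

lemma schur_complement_nth_zero:
  assumes "hermitian A" "0 < Re (A$k$k)" "i = k \<or> (\<forall>j. A$i$j = 0)"
  shows "(A - (1 / Re (A$k$k)) *\<^sub>R outer_prod (column k A)) $ i $ j = 0"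
  using assms(3)
proof
  assume "i = k"
  define \<beta> where "\<beta> = Re (A$k$k)"
  have "A$k$k = of_real \<beta>" unfolding \<beta>_def using assms(1) by (rule hermitian_diag_real)
  moreover have "cnj (A$j$k) = A$k$j" using assms(1) by (rule hermitian_cnj_nth)
  ultimately show ?thesis
    using \<open>i = k\<close> assms(2)
    by (simp add: outer_prod_def column_def scaleR_conv_of_real[where 'a=complex] \<beta>_def[symmetric])
next
  assume "\<forall>j. A$i$j = 0"
  then show ?thesis by (simp add: outer_prod_def column_def)
qed

lemma outer_prod_scaleR: "outer_prod (r *\<^sub>R b) = r\<^sup>2 *\<^sub>R outer_prod b"
  by (simp add: outer_prod_def vec_eq_iff scaleR_conv_of_real[where 'a=complex] power2_eq_square)

lemma psd_eq_sum_outer_prods_rows: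
  fixes A :: "complex^'n^'n"
  assumes "finite K" "psd A" "\<And>i j. i \<notin> K \<Longrightarrow> A$i$j = 0"
  shows "\<exists>bs. A = (\<Sum>b\<leftarrow>bs. outer_prod b)"
  using assms
proof (induction K arbitrary: A rule: finite_induct)
  case empty
  then show ?case by (auto intro: exI[of _ "[]"] simp: vec_eq_iff)
next
  case (insert k K)
  have herm: "hermitian A" using insert.prems(1) by (rule psd_hermitian)
  show ?case
  proof (cases "Re (A$k$k) = 0")
    case True
    then have "A$k$k = 0" using hermitian_diag_real[OF herm, of k] by simp
    then have "A$k$j = 0" for j using insert.prems(1) psd_zero_diag_imp_zero_row by blast
    then have "A$i$j = 0" if "i \<notin> K" for i j
      using insert.prems(2)[of i j] that by (cases "i = k") auto
    then show ?thesis by (rule insert.IH[OF insert.prems(1)])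
  next
    case False
    define \<beta> where "\<beta> = Re (A$k$k)"
    define A' where "A' = A - (1 / \<beta>) *\<^sub>R outer_prod (column k A)"
    have "0 < \<beta>" using False psd_diag_nonneg[OF insert.prems(1), of k] by (simp add: \<beta>_def)
    have "psd A'"
      using insert.prems(1) \<open>0 < \<beta>\<close> by (simp add: A'_def \<beta>_def psd_schur_complement)
    moreover have "A'$i$j = 0" if "i \<notin> K" for i j
      unfolding A'_def \<beta>_def using herm \<open>0 < \<beta>\<close> insert.prems(2)[of i] that
      by (intro schur_complement_nth_zero) (auto simp: \<beta>_def)
    ultimately obtain bs where "A' = (\<Sum>b\<leftarrow>bs. outer_prod b)" using insert.IH by blast
    moreover have "A = outer_prod ((1 / sqrt \<beta>) *\<^sub>R column k A) + A'"
      using \<open>0 < \<beta>\<close> by (simp add: A'_def outer_prod_scaleR power_divide)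
    ultimately show ?thesis by (intro exI[of _ "(1 / sqrt \<beta>) *\<^sub>R column k A # bs"]) simp
  qed
qed

lemma psd_eq_sum_outer_prods:
  fixes A :: "complex^'n^'n"
  assumes "psd A"
  shows "\<exists>bs. A = (\<Sum>b\<leftarrow>bs. outer_prod b)"
  using psd_eq_sum_outer_prods_rows[OF finite_class.finite_UNIV assms] by simp

lemma psd_inner_nonneg:
  assumes "psd A" "psd B"
  shows "0 \<le> inner A B"
proof -
  obtain bs where "B = (\<Sum>b\<leftarrow>bs. outer_prod b)"
    using psd_eq_sum_outer_prods[OF assms(2)] by blast
  moreover have "0 \<le> inner A (outer_prod b)" for b
    using assms(1) by (simp add: psd_iff_inner_outer_prod inner_commute)
  then have "0 \<le> inner A (\<Sum>b\<leftarrow>bs. outer_prod b)" for bs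
    by (induction bs) (simp_all add: inner_add_right)
  ultimately show ?thesis by simp
qed

lemma psd_loewner_le_imp_norm_le:
  assumes "psd A" "loewner_le A B"
  shows "norm A \<le> norm B"
proof -
  have "(norm A)\<^sup>2 \<le> inner A B"
    using psd_inner_nonneg[OF assms(1) assms(2)[unfolded loewner_le_def]]
    by (simp add: inner_diff_right power2_norm_eq_inner)
  also have "\<dots> \<le> norm A * norm B" by (rule norm_cauchy_schwarz)
  finally show ?thesis
    by (cases "norm A = 0") (simp_all add: power2_eq_square)
qed

lemma closed_Collect_psd:
  fixes f :: "'a::topological_space \<Rightarrow> complex^'n^'n"
  assumes "continuous_on UNIV f"
  shows "closed {x. psd (f x)}"
proof -
  have psd_eq: "{x. psd (f x)} = {x. cadj (f x) = f x} \<inter> {x. \<forall>y. 0 \<le> inner (outer_prod y) (f x)}"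
    by (auto simp: psd_iff_inner_outer_prod hermitian_def)
  have "continuous_on UNIV (\<lambda>x. cadj (f x))"
    using linear_continuous_on[OF bounded_linear_cadj, of UNIV] assms
    by (rule continuous_on_compose2) simp
  then have "closed {x. cadj (f x) = f x}"
    using assms by (rule closed_Collect_eq)
  moreover have "closed {x. 0 \<le> inner (outer_prod y) (f x)}" for y
    using assms by (intro closed_Collect_le continuous_on_inner continuous_on_const)
  ultimately show ?thesis
    unfolding psd_eq by (intro closed_Int closed_Collect_all)
qed

section \<open>Weak duality\<close>

definition dual_combination ::
  "'a set \<Rightarrow> ('a \<Rightarrow> complex^'n^'n) \<Rightarrow> 'b set \<Rightarrow> ('b \<Rightarrow> complex^'n^'n)
   \<Rightarrow> ('a \<Rightarrow> real) \<Rightarrow> ('b \<Rightarrow> real) \<Rightarrow> complex^'n^'n" where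
  "dual_combination \<Lambda> P0 \<Sigma> P1 z v = (\<Sum>i\<in>\<Lambda>. z i *\<^sub>R P0 i) - (\<Sum>j\<in>\<Sigma>. v j *\<^sub>R P1 j)"

lemma Re_hs_inner: "Re (hs_inner A B) = inner A B"
proof -
  have "hs_inner A B = (\<Sum>i\<in>UNIV. \<Sum>k\<in>UNIV. cnj (A$k$i) * B$k$i)"
    by (simp add: hs_inner_def ctrace_def matrix_matrix_mult_def)
  also have "\<dots> = (\<Sum>k\<in>UNIV. \<Sum>i\<in>UNIV. cnj (A$k$i) * B$k$i)"
    by (rule sum.swap)
  finally show ?thesis by (simp add: Re_sum inner_vec_def inner_complex_def)
qed

lemma Re_ctrace: "Re (ctrace A) = inner (mat 1) A"
proof -
  have "(\<Sum>j\<in>UNIV. inner (mat 1 $ i $ j) (A$i$j)) = (\<Sum>j\<in>UNIV. if j = i then Re (A$i$i) else 0)"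
    for i
    by (rule sum.cong) (auto simp: mat_def inner_complex_def)
  then show ?thesis by (simp add: ctrace_def inner_vec_def Re_sum)
qed

lemma primal_feasible_iff_inner:
  "primal_feasible \<epsilon> \<Lambda> P0 \<Sigma> P1 X \<gamma> \<longleftrightarrow>
     (\<forall>i\<in>\<Lambda>. 1 - \<epsilon> \<le> inner X (P0 i)) \<and> (\<forall>j\<in>\<Sigma>. inner X (P1 j) \<le> \<gamma>) \<and>
     psd (mat 1 - X) \<and> 0 \<le> \<gamma> \<and> psd X"
  by (simp add: primal_feasible_def loewner_le_def Re_hs_inner)

lemma dual_objective_nonneg_weights:
  "\<forall>i\<in>\<Lambda>. 0 \<le> z i \<Longrightarrow>
    dual_objective \<epsilon> \<Lambda> z Z = (1 - \<epsilon>) * (\<Sum>i\<in>\<Lambda>. z i) - inner (mat 1) Z"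
  by (simp add: dual_objective_def Re_ctrace)

lemma inner_dual_combination:
  "inner X (dual_combination \<Lambda> P0 \<Sigma> P1 z v) =
    (\<Sum>i\<in>\<Lambda>. z i * inner X (P0 i)) - (\<Sum>j\<in>\<Sigma>. v j * inner X (P1 j))"
  by (simp add: dual_combination_def inner_diff_right inner_sum_right)

lemma hermitian_dual_combination:
  "\<forall>i\<in>\<Lambda>. psd (P0 i) \<Longrightarrow> \<forall>j\<in>\<Sigma>. psd (P1 j) \<Longrightarrow>
    hermitian (dual_combination \<Lambda> P0 \<Sigma> P1 z v)"
  by (simp add: dual_combination_def psd_hermitian hermitian_diff hermitian_sum hermitian_scaleR)

lemma dual_combination_zero: "dual_combination \<Lambda> P0 \<Sigma> P1 (\<lambda>_. 0) (\<lambda>_. 0) = 0"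
  by (simp add: dual_combination_def)

lemma dual_combination_linear:
  "dual_combination \<Lambda> P0 \<Sigma> P1 (\<lambda>i. a * z i + b * z' i) (\<lambda>j. a * v j + b * v' j) =
    a *\<^sub>R dual_combination \<Lambda> P0 \<Sigma> P1 z v + b *\<^sub>R dual_combination \<Lambda> P0 \<Sigma> P1 z' v'"
  by (simp add: dual_combination_def scaleR_add_left sum.distrib scaleR_sum_right algebra_simps)

lemma weak_duality:
  assumes "primal_feasible \<epsilon> \<Lambda> P0 \<Sigma> P1 X \<gamma>" and "dual_feasible \<Lambda> P0 \<Sigma> P1 z v Z"
  shows "dual_objective \<epsilon> \<Lambda> z Z \<le> \<gamma>"
proof -
  have P0: "\<And>i. i \<in> \<Lambda> \<Longrightarrow> 1 - \<epsilon> \<le> inner X (P0 i)"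
    and P1: "\<And>j. j \<in> \<Sigma> \<Longrightarrow> inner X (P1 j) \<le> \<gamma>"
    and "psd (mat 1 - X)" "0 \<le> \<gamma>" "psd X"
    using assms(1) by (auto simp: primal_feasible_iff_inner)
  have "psd (Z - dual_combination \<Lambda> P0 \<Sigma> P1 z v)" and "(\<Sum>j\<in>\<Sigma>. v j) \<le> 1"
    and v: "\<And>j. j \<in> \<Sigma> \<Longrightarrow> 0 \<le> v j" and z: "\<forall>i\<in>\<Lambda>. 0 \<le> z i" and "psd Z"
    using assms(2) by (auto simp: dual_feasible_def loewner_le_def dual_combination_def)
  have "(1 - \<epsilon>) * (\<Sum>i\<in>\<Lambda>. z i) - \<gamma> \<le> (1 - \<epsilon>) * (\<Sum>i\<in>\<Lambda>. z i) - \<gamma> * (\<Sum>j\<in>\<Sigma>. v j)"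
    using \<open>0 \<le> \<gamma>\<close> \<open>(\<Sum>j\<in>\<Sigma>. v j) \<le> 1\<close> by (simp add: mult_left_le)
  also have "\<dots> = (\<Sum>i\<in>\<Lambda>. z i * (1 - \<epsilon>)) - (\<Sum>j\<in>\<Sigma>. v j * \<gamma>)"
    by (simp add: sum_distrib_left sum_distrib_right mult.commute)
  also have "\<dots> \<le> (\<Sum>i\<in>\<Lambda>. z i * inner X (P0 i)) - (\<Sum>j\<in>\<Sigma>. v j * inner X (P1 j))"
    using z v P0 P1 by (intro diff_mono sum_mono mult_left_mono) auto
  also have "\<dots> = inner X (dual_combination \<Lambda> P0 \<Sigma> P1 z v)"
    by (rule inner_dual_combination[symmetric])
  also have "\<dots> \<le> inner X Z"
    using psd_inner_nonneg[OF \<open>psd X\<close> \<open>psd (Z - _)\<close>] by (simp add: inner_diff_right)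
  also have "\<dots> \<le> inner (mat 1) Z"
    using psd_inner_nonneg[OF \<open>psd (mat 1 - X)\<close> \<open>psd Z\<close>] by (simp add: inner_diff_left)
  finally show ?thesis
    using z by (simp add: dual_objective_nonneg_weights)
qed

section \<open>Strong duality by separation\<close>

text \<open>
  Taking the Hermitian part makes the set invariant under anti-Hermitian \<open>Y\<close>, which
  forces a separating functional to be Hermitian.
\<close>
definition dual_perturbation_set ::
  "real \<Rightarrow> real \<Rightarrow> 'a set \<Rightarrow> ('a \<Rightarrow> complex^'n^'n) \<Rightarrow> 'b set \<Rightarrow> ('b \<Rightarrow> complex^'n^'n)
   \<Rightarrow> (real \<times> (complex^'n^'n) \<times> real) set" where
  "dual_perturbation_set \<epsilon> d \<Lambda> P0 \<Sigma> P1 = {(\<alpha>, Y, \<beta>). \<exists>z v Z.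
     (\<forall>i\<in>\<Lambda>. 0 \<le> z i) \<and> (\<forall>j\<in>\<Sigma>. 0 \<le> v j) \<and> psd Z \<and>
     \<alpha> \<le> (1 - \<epsilon>) * (\<Sum>i\<in>\<Lambda>. z i) - inner (mat 1) Z - d \<and>
     psd (Z - dual_combination \<Lambda> P0 \<Sigma> P1 z v - herm_part Y) \<and> \<beta> \<le> 1 - (\<Sum>j\<in>\<Sigma>. v j)}"

lemma dual_perturbation_setI:
  assumes "\<forall>i\<in>\<Lambda>. 0 \<le> z i" "\<forall>j\<in>\<Sigma>. 0 \<le> v j" "psd Z"
    and "\<alpha> \<le> (1 - \<epsilon>) * (\<Sum>i\<in>\<Lambda>. z i) - inner (mat 1) Z - d"
    and "psd (Z - dual_combination \<Lambda> P0 \<Sigma> P1 z v - herm_part Y)"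
    and "\<beta> \<le> 1 - (\<Sum>j\<in>\<Sigma>. v j)"
  shows "(\<alpha>, Y, \<beta>) \<in> dual_perturbation_set \<epsilon> d \<Lambda> P0 \<Sigma> P1"
  using assms unfolding dual_perturbation_set_def by blast

lemma dual_perturbation_set_combination:
  assumes "(\<alpha>, Y, \<beta>) \<in> dual_perturbation_set \<epsilon> d \<Lambda> P0 \<Sigma> P1"
    and "(\<alpha>', Y', \<beta>') \<in> dual_perturbation_set \<epsilon> d \<Lambda> P0 \<Sigma> P1"
    and ab: "0 \<le> a" "0 \<le> b" "a + b = 1"
  shows "(a * \<alpha> + b * \<alpha>', a *\<^sub>R Y + b *\<^sub>R Y', a * \<beta> + b * \<beta>')
    \<in> dual_perturbation_set \<epsilon> d \<Lambda> P0 \<Sigma> P1"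
proof -
  obtain z v Z z' v' Z' where z: "\<forall>i\<in>\<Lambda>. 0 \<le> z i" "\<forall>i\<in>\<Lambda>. 0 \<le> z' i"
    and v: "\<forall>j\<in>\<Sigma>. 0 \<le> v j" "\<forall>j\<in>\<Sigma>. 0 \<le> v' j"
    and Z: "psd Z" "psd Z'"
    and \<alpha>: "\<alpha> \<le> (1 - \<epsilon>) * (\<Sum>i\<in>\<Lambda>. z i) - inner (mat 1) Z - d"
      "\<alpha>' \<le> (1 - \<epsilon>) * (\<Sum>i\<in>\<Lambda>. z' i) - inner (mat 1) Z' - d"
    and Y: "psd (Z - dual_combination \<Lambda> P0 \<Sigma> P1 z v - herm_part Y)"
      "psd (Z' - dual_combination \<Lambda> P0 \<Sigma> P1 z' v' - herm_part Y')"
    and \<beta>: "\<beta> \<le> 1 - (\<Sum>j\<in>\<Sigma>. v j)" "\<beta>' \<le> 1 - (\<Sum>j\<in>\<Sigma>. v' j)"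
    using assms(1,2) unfolding dual_perturbation_set_def by blast
  have b: "b = 1 - a" using ab(3) by simp
  have sums: "(\<Sum>i\<in>\<Lambda>. a * z i + b * z' i) = a * (\<Sum>i\<in>\<Lambda>. z i) + b * (\<Sum>i\<in>\<Lambda>. z' i)"
    "(\<Sum>j\<in>\<Sigma>. a * v j + b * v' j) = a * (\<Sum>j\<in>\<Sigma>. v j) + b * (\<Sum>j\<in>\<Sigma>. v' j)"
    by (simp_all add: sum.distrib sum_distrib_left)
  show ?thesis
  proof (rule dual_perturbation_setI[where z = "\<lambda>i. a * z i + b * z' i"
        and v = "\<lambda>j. a * v j + b * v' j" and Z = "a *\<^sub>R Z + b *\<^sub>R Z'"])
    show "\<forall>i\<in>\<Lambda>. 0 \<le> a * z i + b * z' i" "\<forall>j\<in>\<Sigma>. 0 \<le> a * v j + b * v' j"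
      using z v ab by simp_all
    show "psd (a *\<^sub>R Z + b *\<^sub>R Z')"
      using Z ab by (simp add: psd_add psd_scaleR)
    have "a * \<alpha> + b * \<alpha>' \<le> a * ((1 - \<epsilon>) * (\<Sum>i\<in>\<Lambda>. z i) - inner (mat 1) Z - d)
        + b * ((1 - \<epsilon>) * (\<Sum>i\<in>\<Lambda>. z' i) - inner (mat 1) Z' - d)"
      using \<alpha> ab by (intro add_mono mult_left_mono)
    then show "a * \<alpha> + b * \<alpha>' \<le> (1 - \<epsilon>) * (\<Sum>i\<in>\<Lambda>. a * z i + b * z' i)
        - inner (mat 1) (a *\<^sub>R Z + b *\<^sub>R Z') - d"
      unfolding sums by (simp add: inner_add_right b algebra_simps)
    have "a *\<^sub>R Z + b *\<^sub>R Z' - dual_combination \<Lambda> P0 \<Sigma> P1 (\<lambda>i. a * z i + b * z' i)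
        (\<lambda>j. a * v j + b * v' j) - herm_part (a *\<^sub>R Y + b *\<^sub>R Y') =
      a *\<^sub>R (Z - dual_combination \<Lambda> P0 \<Sigma> P1 z v - herm_part Y) +
      b *\<^sub>R (Z' - dual_combination \<Lambda> P0 \<Sigma> P1 z' v' - herm_part Y')"
      by (simp add: dual_combination_linear herm_part_add herm_part_scaleR algebra_simps)
    then show "psd (a *\<^sub>R Z + b *\<^sub>R Z' - dual_combination \<Lambda> P0 \<Sigma> P1 (\<lambda>i. a * z i + b * z' i)
        (\<lambda>j. a * v j + b * v' j) - herm_part (a *\<^sub>R Y + b *\<^sub>R Y'))"
      using Y ab by (simp add: psd_add psd_scaleR)
    have "a * \<beta> + b * \<beta>' \<le> a * (1 - (\<Sum>j\<in>\<Sigma>. v j)) + b * (1 - (\<Sum>j\<in>\<Sigma>. v' j))"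
      using \<beta> ab by (intro add_mono mult_left_mono)
    then show "a * \<beta> + b * \<beta>' \<le> 1 - (\<Sum>j\<in>\<Sigma>. a * v j + b * v' j)"
      unfolding sums by (simp add: b algebra_simps)
  qed
qed

lemma convex_dual_perturbation_set: "convex (dual_perturbation_set \<epsilon> d \<Lambda> P0 \<Sigma> P1)"
proof (rule convexI)
  fix g g' and a b :: real
  assume "g \<in> dual_perturbation_set \<epsilon> d \<Lambda> P0 \<Sigma> P1" "g' \<in> dual_perturbation_set \<epsilon> d \<Lambda> P0 \<Sigma> P1"
    and "0 \<le> a" "0 \<le> b" "a + b = 1"
  moreover obtain \<alpha> Y \<beta> \<alpha>' Y' \<beta>' where "g = (\<alpha>, Y, \<beta>)" "g' = (\<alpha>', Y', \<beta>')"
    by (cases g, cases g') auto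
  ultimately show "a *\<^sub>R g + b *\<^sub>R g' \<in> dual_perturbation_set \<epsilon> d \<Lambda> P0 \<Sigma> P1"
    by (simp add: dual_perturbation_set_combination)
qed

lemma zero_notin_dual_perturbation_set:
  assumes "\<And>z v Z. dual_feasible \<Lambda> P0 \<Sigma> P1 z v Z \<Longrightarrow> dual_objective \<epsilon> \<Lambda> z Z < d"
  shows "0 \<notin> dual_perturbation_set \<epsilon> d \<Lambda> P0 \<Sigma> P1"
proof
  assume "0 \<in> dual_perturbation_set \<epsilon> d \<Lambda> P0 \<Sigma> P1"
  then obtain z v Z where z: "\<forall>i\<in>\<Lambda>. 0 \<le> z i" and "\<forall>j\<in>\<Sigma>. 0 \<le> v j" "psd Z"
    and obj: "d \<le> (1 - \<epsilon>) * (\<Sum>i\<in>\<Lambda>. z i) - inner (mat 1) Z"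
    and "psd (Z - dual_combination \<Lambda> P0 \<Sigma> P1 z v)" "(\<Sum>j\<in>\<Sigma>. v j) \<le> 1"
    unfolding dual_perturbation_set_def zero_prod_def by (auto simp: herm_part_zero)
  then have "dual_feasible \<Lambda> P0 \<Sigma> P1 z v Z"
    by (simp add: dual_feasible_def loewner_le_def dual_combination_def psd_hermitian)
  with assms have "dual_objective \<epsilon> \<Lambda> z Z < d" by blast
  with obj z show False by (simp add: dual_objective_nonneg_weights)
qed

text \<open>
  \<open>(l, X, m)\<close> is the negative of a functional separating \<open>0\<close> from the perturbation set: \<open>l\<close>
  weighs the objective and \<open>m\<close> the budget \<open>\<Sigma>v \<le> 1\<close>, and \<open>(X / l, m / l)\<close> will be the primal point.
\<close>
context
  fixes \<epsilon> d :: real and \<Lambda> :: "'a set" and \<Sigma> :: "'b set"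
    and P0 :: "'a \<Rightarrow> complex^'n^'n" and P1 :: "'b \<Rightarrow> complex^'n^'n"
    and l m :: real and X :: "complex^'n^'n"
  assumes finite: "finite \<Lambda>" "finite \<Sigma>"
    and psd_P: "\<forall>i\<in>\<Lambda>. psd (P0 i)" "\<forall>j\<in>\<Sigma>. psd (P1 j)"
    and separating: "\<And>g. g \<in> dual_perturbation_set \<epsilon> d \<Lambda> P0 \<Sigma> P1 \<Longrightarrow> inner (l, X, m) g \<le> 0"
begin

lemma separating_at_dual_point:
  assumes "\<forall>i\<in>\<Lambda>. 0 \<le> z i" "\<forall>j\<in>\<Sigma>. 0 \<le> v j" "psd Z"
  shows "l * ((1 - \<epsilon>) * (\<Sum>i\<in>\<Lambda>. z i) - inner (mat 1) Z - d)
    + inner X (Z - dual_combination \<Lambda> P0 \<Sigma> P1 z v) + m * (1 - (\<Sum>j\<in>\<Sigma>. v j)) \<le> 0"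
proof -
  have "hermitian (Z - dual_combination \<Lambda> P0 \<Sigma> P1 z v)"
    using assms(3) psd_P by (simp add: hermitian_diff psd_hermitian hermitian_dual_combination)
  then have "((1 - \<epsilon>) * (\<Sum>i\<in>\<Lambda>. z i) - inner (mat 1) Z - d, Z - dual_combination \<Lambda> P0 \<Sigma> P1 z v,
      1 - (\<Sum>j\<in>\<Sigma>. v j)) \<in> dual_perturbation_set \<epsilon> d \<Lambda> P0 \<Sigma> P1"
    using assms
    by (intro dual_perturbation_setI[where z = z and v = v and Z = Z])
      (simp_all add: herm_part_hermitian psd_zero)
  from separating[OF this] show ?thesis by simp
qed

lemma separating_at_zero_dual_point:
  assumes "psd (- herm_part Y)" "\<alpha> \<le> - d" "\<beta> \<le> 1"
  shows "l * \<alpha> + inner X Y + m * \<beta> \<le> 0"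
proof -
  have "(\<alpha>, Y, \<beta>) \<in> dual_perturbation_set \<epsilon> d \<Lambda> P0 \<Sigma> P1"
    using assms
    by (intro dual_perturbation_setI[where z = "\<lambda>_. 0" and v = "\<lambda>_. 0" and Z = 0])
      (simp_all add: psd_zero dual_combination_zero)
  from separating[OF this] show ?thesis by simp
qed

lemma separating_nonneg_l: "0 \<le> l"
proof -
  have "- l * d + t * (- l) \<le> 0" if "0 \<le> t" for t
    using separating_at_zero_dual_point[of 0 "- d - t" 0] that
    by (simp add: herm_part_zero psd_zero algebra_simps)
  then have "- l \<le> 0" by (rule affine_nonpos_imp_slope_nonpos)
  then show ?thesis by simp
qed

lemma separating_nonneg_m: "0 \<le> m"
proof -
  have "- l * d + t * (- m) \<le> 0" if "0 \<le> t" for t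
    using separating_at_zero_dual_point[of 0 "- d" "- t"] that
    by (simp add: herm_part_zero psd_zero algebra_simps)
  then have "- m \<le> 0" by (rule affine_nonpos_imp_slope_nonpos)
  then show ?thesis by simp
qed

lemma separating_hermitian: "hermitian X"
proof -
  define K where "K = X - cadj X"
  have "herm_part (t *\<^sub>R K) = 0" for t
    by (simp add: K_def herm_part_def algebra_simps)
  then have "- l * d + t * inner X K \<le> 0" for t
    using separating_at_zero_dual_point[of "t *\<^sub>R K" "- d" 0] by (simp add: psd_zero)
  then have "inner X K \<le> 0" "- inner X K \<le> 0"
    using affine_nonpos_imp_slope_nonpos[of "- l * d" "inner X K"]
      affine_nonpos_imp_slope_nonpos[of "- l * d" "- inner X K"]
    by (metis mult_minus_left mult_minus_right)+
  \<comment> \<open>\<open>\<langle>X, K\<rangle> = \<langle>K, K\<rangle> / 2\<close>, because the anti-Hermitian \<open>K\<close> is orthogonal to the Hermitian \<open>X + X\<^sup>*\<close>\<close>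
  moreover have "inner K K = 2 * inner X K"
    using inner_cadj_cadj[of X X] inner_cadj_cadj[of X "cadj X"]
    by (simp add: K_def inner_diff_left inner_diff_right inner_commute)
  ultimately have "K = 0" by simp
  then show ?thesis by (simp add: K_def hermitian_def)
qed

lemma separating_psd: "psd X"
proof -
  have "0 \<le> inner (outer_prod x) X" for x
  proof -
    have "- l * d + t * (- inner X (outer_prod x)) \<le> 0" if "0 \<le> t" for t
    proof -
      have "- herm_part ((- t) *\<^sub>R outer_prod x) = t *\<^sub>R outer_prod x"
        using herm_part_hermitian[OF hermitian_scaleR[OF hermitian_outer_prod], of "- t" x]
        by simp
      then show ?thesis
        using separating_at_zero_dual_point[of "(- t) *\<^sub>R outer_prod x" "- d" 0] that
        by (simp add: psd_scaleR psd_outer_prod)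
    qed
    then have "- inner X (outer_prod x) \<le> 0" by (rule affine_nonpos_imp_slope_nonpos)
    then show ?thesis by (simp add: inner_commute)
  qed
  then show ?thesis by (simp add: psd_iff_inner_outer_prod separating_hermitian)
qed

lemma separating_m_le: "m \<le> l * d"
  using separating_at_dual_point[of "\<lambda>_. 0" "\<lambda>_. 0" 0]
  by (simp add: psd_zero dual_combination_zero)

lemma separating_pos_l:
  assumes "(l, X, m) \<noteq> 0"
  shows "0 < l"
proof (rule ccontr)
  assume "\<not> 0 < l"
  then have "l = 0" using separating_nonneg_l by simp
  then have "m = 0" using separating_m_le separating_nonneg_m by simp
  have "inner X X \<le> 0"
    using separating_at_dual_point[of "\<lambda>_. 0" "\<lambda>_. 0" X] separating_psd
    by (simp add: dual_combination_zero \<open>l = 0\<close> \<open>m = 0\<close>)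
  then have "inner X X = 0" using inner_ge_zero[of X] by linarith
  then have "X = 0" by simp
  with \<open>l = 0\<close> \<open>m = 0\<close> assms show False by (simp add: zero_prod_def)
qed

lemma separating_loewner_le: "psd (l *\<^sub>R mat 1 - X)"
proof -
  have "0 \<le> inner (outer_prod x) (l *\<^sub>R mat 1 - X)" for x
  proof -
    have "(m - l * d) + t * (inner X (outer_prod x) - l * inner (mat 1) (outer_prod x)) \<le> 0"
      if "0 \<le> t" for t
      using separating_at_dual_point[of "\<lambda>_. 0" "\<lambda>_. 0" "t *\<^sub>R outer_prod x"] that
      by (simp add: psd_scaleR psd_outer_prod dual_combination_zero inner_commute algebra_simps)
    then have "inner X (outer_prod x) - l * inner (mat 1) (outer_prod x) \<le> 0"
      by (rule affine_nonpos_imp_slope_nonpos)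
    then show ?thesis by (simp add: inner_diff_right inner_commute)
  qed
  moreover have "hermitian (l *\<^sub>R mat 1 - X)"
    by (intro hermitian_diff hermitian_scaleR hermitian_mat_1 separating_hermitian)
  ultimately show ?thesis by (simp add: psd_iff_inner_outer_prod)
qed

lemma separating_P0_bound:
  assumes "i \<in> \<Lambda>"
  shows "l * (1 - \<epsilon>) \<le> inner X (P0 i)"
proof -
  have "(m - l * d) + t * (l * (1 - \<epsilon>) - inner X (P0 i)) \<le> 0" if "0 \<le> t" for t
  proof -
    have "dual_combination \<Lambda> P0 \<Sigma> P1 (\<lambda>k. if k = i then t else 0) (\<lambda>_. 0) = t *\<^sub>R P0 i"
      using finite(1) assms by (simp add: dual_combination_def if_distrib[of "\<lambda>r. r *\<^sub>R _"]
          cong: if_cong)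
    then show ?thesis
      using separating_at_dual_point[of "\<lambda>k. if k = i then t else 0" "\<lambda>_. 0" 0] that
        finite(1) assms
      by (simp add: psd_zero algebra_simps)
  qed
  then have "l * (1 - \<epsilon>) - inner X (P0 i) \<le> 0" by (rule affine_nonpos_imp_slope_nonpos)
  then show ?thesis by simp
qed

lemma separating_P1_bound:
  assumes "j \<in> \<Sigma>"
  shows "inner X (P1 j) \<le> m"
proof -
  have "(m - l * d) + t * (inner X (P1 j) - m) \<le> 0" if "0 \<le> t" for t
  proof -
    have "dual_combination \<Lambda> P0 \<Sigma> P1 (\<lambda>_. 0) (\<lambda>k. if k = j then t else 0) = - (t *\<^sub>R P1 j)"
      using finite(2) assms by (simp add: dual_combination_def if_distrib[of "\<lambda>r. r *\<^sub>R _"]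
          cong: if_cong)
    then show ?thesis
      using separating_at_dual_point[of "\<lambda>_. 0" "\<lambda>k. if k = j then t else 0" 0] that
        finite(2) assms
      by (simp add: psd_zero algebra_simps)
  qed
  then have "inner X (P1 j) - m \<le> 0" by (rule affine_nonpos_imp_slope_nonpos)
  then show ?thesis by simp
qed

lemma separating_primal_feasible:
  assumes "(l, X, m) \<noteq> 0"
  shows "primal_feasible \<epsilon> \<Lambda> P0 \<Sigma> P1 ((1 / l) *\<^sub>R X) (m / l) \<and> m / l \<le> d"
proof -
  have "0 < l" using assms by (rule separating_pos_l)
  have "psd ((1 / l) *\<^sub>R (l *\<^sub>R mat 1 - X))"
    using separating_loewner_le \<open>0 < l\<close> by (simp add: psd_scaleR)
  moreover have "1 - \<epsilon> \<le> inner ((1 / l) *\<^sub>R X) (P0 i)" if "i \<in> \<Lambda>" for i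
    using separating_P0_bound[OF that] \<open>0 < l\<close> by (simp add: field_simps)
  moreover have "inner ((1 / l) *\<^sub>R X) (P1 j) \<le> m / l" if "j \<in> \<Sigma>" for j
    using separating_P1_bound[OF that] \<open>0 < l\<close> by (simp add: field_simps)
  ultimately show ?thesis
    using separating_psd separating_nonneg_m separating_m_le \<open>0 < l\<close>
    by (simp add: primal_feasible_iff_inner psd_scaleR scaleR_diff_right field_simps)
qed

end

lemma primal_feasible_below_dual_bound:
  fixes P0 :: "'a \<Rightarrow> complex^'n^'n" and P1 :: "'b \<Rightarrow> complex^'n^'n"
  assumes "finite \<Lambda>" "finite \<Sigma>" "\<forall>i\<in>\<Lambda>. psd (P0 i)" "\<forall>j\<in>\<Sigma>. psd (P1 j)"
    and "\<And>z v Z. dual_feasible \<Lambda> P0 \<Sigma> P1 z v Z \<Longrightarrow> dual_objective \<epsilon> \<Lambda> z Z < d"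
  shows "\<exists>X \<gamma>. primal_feasible \<epsilon> \<Lambda> P0 \<Sigma> P1 X \<gamma> \<and> \<gamma> \<le> d"
proof -
  have "0 \<notin> dual_perturbation_set \<epsilon> d \<Lambda> P0 \<Sigma> P1"
    using assms(5) by (rule zero_notin_dual_perturbation_set)
  with convex_dual_perturbation_set obtain a where "a \<noteq> 0"
    and a: "\<forall>g\<in>dual_perturbation_set \<epsilon> d \<Lambda> P0 \<Sigma> P1. 0 \<le> inner a g"
    by (blast dest: separating_hyperplane_set_0)
  define l X m where "l = fst (- a)" and "X = fst (snd (- a))" and "m = snd (snd (- a))"
  then have lXm: "(l, X, m) = - a" by (simp add: prod_eq_iff)
  have "(l, X, m) \<noteq> 0" using \<open>a \<noteq> 0\<close> by (simp add: lXm)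
  have "inner (l, X, m) g \<le> 0" if "g \<in> dual_perturbation_set \<epsilon> d \<Lambda> P0 \<Sigma> P1" for g
    using a that by (simp add: lXm)
  from separating_primal_feasible[OF assms(1-4) this \<open>(l, X, m) \<noteq> 0\<close>] show ?thesis
    by blast
qed

section \<open>Attainment and optimal values\<close>

lemma closed_primal_feasible_set:
  fixes P0 :: "'a \<Rightarrow> complex^'n^'n" and P1 :: "'b \<Rightarrow> complex^'n^'n"
  shows "closed {p. primal_feasible \<epsilon> \<Lambda> P0 \<Sigma> P1 (fst p) (snd p)}"
proof -
  have fst: "continuous_on UNIV (\<lambda>p :: (complex^'n^'n) \<times> real. fst p)"
    and snd: "continuous_on UNIV (\<lambda>p :: (complex^'n^'n) \<times> real. snd p)"
    by (rule continuous_on_fst continuous_on_snd, rule continuous_on_id)+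
  have feasible_set: "{p. primal_feasible \<epsilon> \<Lambda> P0 \<Sigma> P1 (fst p) (snd p)} =
      (\<Inter>i\<in>\<Lambda>. {p. 1 - \<epsilon> \<le> inner (fst p) (P0 i)}) \<inter> (\<Inter>j\<in>\<Sigma>. {p. inner (fst p) (P1 j) \<le> snd p})
      \<inter> {p. psd (mat 1 - fst p)} \<inter> {p. 0 \<le> snd p} \<inter> {p. psd (fst p)}"
    by (auto simp: primal_feasible_iff_inner)
  have c1: "closed {p :: (complex^'n^'n) \<times> real. 1 - \<epsilon> \<le> inner (fst p) (P0 i)}" for i
    by (intro closed_Collect_le continuous_on_const continuous_on_inner fst)
  have c2: "closed {p :: (complex^'n^'n) \<times> real. inner (fst p) (P1 j) \<le> snd p}" for j
    by (intro closed_Collect_le continuous_on_const continuous_on_inner fst snd)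
  have c3: "closed {p :: (complex^'n^'n) \<times> real. psd (mat 1 - fst p)}"
    by (intro closed_Collect_psd continuous_on_diff continuous_on_const fst)
  have c4: "closed {p :: (complex^'n^'n) \<times> real. 0 \<le> snd p}"
    by (intro closed_Collect_le continuous_on_const snd)
  have c5: "closed {p :: (complex^'n^'n) \<times> real. psd (fst p)}"
    using fst by (rule closed_Collect_psd)
  show ?thesis
    unfolding feasible_set by (intro closed_Int closed_INT ballI c1 c2 c3 c4 c5)
qed

lemma primal_feasible_norm_le:
  fixes X :: "complex^'n^'n"
  shows "primal_feasible \<epsilon> \<Lambda> P0 \<Sigma> P1 X \<gamma> \<Longrightarrow> norm X \<le> norm (mat 1 :: complex^'n^'n)"
  by (simp add: primal_feasible_def psd_loewner_le_imp_norm_le)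

lemma primal_minimum_exists:
  fixes P0 :: "'a \<Rightarrow> complex^'n^'n" and P1 :: "'b \<Rightarrow> complex^'n^'n"
  assumes "primal_feasible \<epsilon> \<Lambda> P0 \<Sigma> P1 X\<^sub>1 \<gamma>\<^sub>1"
  shows "\<exists>X \<gamma>. primal_feasible \<epsilon> \<Lambda> P0 \<Sigma> P1 X \<gamma> \<and>
    (\<forall>X' \<gamma>'. primal_feasible \<epsilon> \<Lambda> P0 \<Sigma> P1 X' \<gamma>' \<longrightarrow> \<gamma> \<le> \<gamma>')"
proof -
  define T where "T = {p. primal_feasible \<epsilon> \<Lambda> P0 \<Sigma> P1 (fst p) (snd p)} \<inter> {p. snd p \<le> \<gamma>\<^sub>1}"
  have "closed T"
    unfolding T_def
    by (intro closed_Int closed_primal_feasible_set closed_Collect_le continuous_on_const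
        continuous_on_snd[OF continuous_on_id])
  moreover have "T \<subseteq> cball 0 (norm (mat 1 :: complex^'n^'n) + \<gamma>\<^sub>1)"
  proof
    fix p assume "p \<in> T"
    then have "norm (fst p) \<le> norm (mat 1 :: complex^'n^'n)" "norm (snd p) \<le> \<gamma>\<^sub>1"
      by (auto simp: T_def primal_feasible_norm_le) (auto simp: primal_feasible_def)
    then show "p \<in> cball 0 (norm (mat 1 :: complex^'n^'n) + \<gamma>\<^sub>1)"
      using norm_Pair_le[of "fst p" "snd p"] by simp
  qed
  ultimately have "compact T"
    using bounded_subset[OF bounded_cball] compact_eq_bounded_closed by blast
  moreover have "(X\<^sub>1, \<gamma>\<^sub>1) \<in> T" using assms by (simp add: T_def)
  then have "T \<noteq> {}" by blast
  ultimately obtain p where "p \<in> T" and min: "\<forall>q\<in>T. snd p \<le> snd q"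
    using continuous_attains_inf[OF _ _ continuous_on_snd[OF continuous_on_id]] by blast
  have "snd p \<le> \<gamma>'" if "primal_feasible \<epsilon> \<Lambda> P0 \<Sigma> P1 X' \<gamma>'" for X' \<gamma>'
  proof (cases "\<gamma>' \<le> \<gamma>\<^sub>1")
    case True
    with that have "(X', \<gamma>') \<in> T" by (simp add: T_def)
    then show ?thesis using min by (metis snd_conv)
  next
    case False
    with \<open>p \<in> T\<close> show ?thesis by (simp add: T_def)
  qed
  moreover have "primal_feasible \<epsilon> \<Lambda> P0 \<Sigma> P1 (fst p) (snd p)"
    using \<open>p \<in> T\<close> by (simp add: T_def)
  ultimately show ?thesis by blast
qed

lemma dual_value_le_primal_value: "dual_value \<epsilon> \<Lambda> P0 \<Sigma> P1 \<le> primal_value \<epsilon> \<Lambda> P0 \<Sigma> P1"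
  unfolding dual_value_def primal_value_def
  by (intro SUP_least INF_greatest) (auto intro: weak_duality)

lemma dual_value_nonneg: "0 \<le> dual_value \<epsilon> \<Lambda> P0 \<Sigma> P1"
proof -
  have "dual_feasible \<Lambda> P0 \<Sigma> P1 (\<lambda>_. 0) (\<lambda>_. 0) 0"
    by (simp add: dual_feasible_def loewner_le_def psd_zero hermitian_zero)
  then show ?thesis
    unfolding dual_value_def
    by (intro SUP_upper2[where i = "(\<lambda>_. 0, \<lambda>_. 0, 0)"])
      (simp_all add: dual_objective_def ctrace_def zero_ereal_def)
qed

lemma primal_value_le_dual_value:
  fixes P0 :: "'a \<Rightarrow> complex^'n^'n" and P1 :: "'b \<Rightarrow> complex^'n^'n"
  assumes "finite \<Lambda>" "finite \<Sigma>" "\<forall>i\<in>\<Lambda>. psd (P0 i)" "\<forall>j\<in>\<Sigma>. psd (P1 j)"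
  shows "primal_value \<epsilon> \<Lambda> P0 \<Sigma> P1 \<le> dual_value \<epsilon> \<Lambda> P0 \<Sigma> P1"
proof (cases "dual_value \<epsilon> \<Lambda> P0 \<Sigma> P1")
  case PInf
  then show ?thesis by simp
next
  case MInf
  then show ?thesis using dual_value_nonneg[of \<epsilon> \<Lambda> P0 \<Sigma> P1] by simp
next
  case (real \<delta>)
  show ?thesis
  proof (rule ereal_le_epsilon2)
    fix e :: real assume "0 < e"
    have bound: "dual_objective \<epsilon> \<Lambda> z Z < \<delta> + e" if "dual_feasible \<Lambda> P0 \<Sigma> P1 z v Z" for z v Z
    proof -
      have "ereal (dual_objective \<epsilon> \<Lambda> z Z) \<le> dual_value \<epsilon> \<Lambda> P0 \<Sigma> P1"
        unfolding dual_value_def by (rule SUP_upper2[where i = "(z, v, Z)"]) (simp_all add: that)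
      with real \<open>0 < e\<close> show ?thesis by simp
    qed
    have "\<exists>X \<gamma>. primal_feasible \<epsilon> \<Lambda> P0 \<Sigma> P1 X \<gamma> \<and> \<gamma> \<le> \<delta> + e"
      by (rule primal_feasible_below_dual_bound[OF assms]) (erule bound)
    then obtain X \<gamma> where "primal_feasible \<epsilon> \<Lambda> P0 \<Sigma> P1 X \<gamma>" "\<gamma> \<le> \<delta> + e"
      by blast
    then have "primal_value \<epsilon> \<Lambda> P0 \<Sigma> P1 \<le> ereal (\<delta> + e)"
      unfolding primal_value_def by (intro INF_lower2[where i = "(X, \<gamma>)"]) simp_all
    then show "primal_value \<epsilon> \<Lambda> P0 \<Sigma> P1 \<le> dual_value \<epsilon> \<Lambda> P0 \<Sigma> P1 + ereal e"
      by (simp add: real)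
  qed
qed

lemma primal_value_attained:
  assumes "primal_feasible \<epsilon> \<Lambda> P0 \<Sigma> P1 X\<^sub>1 \<gamma>\<^sub>1"
  shows "\<exists>X \<gamma>. primal_feasible \<epsilon> \<Lambda> P0 \<Sigma> P1 X \<gamma> \<and> ereal \<gamma> = primal_value \<epsilon> \<Lambda> P0 \<Sigma> P1"
proof -
  obtain X \<gamma> where feasible: "primal_feasible \<epsilon> \<Lambda> P0 \<Sigma> P1 X \<gamma>"
    and min: "\<And>X' \<gamma>'. primal_feasible \<epsilon> \<Lambda> P0 \<Sigma> P1 X' \<gamma>' \<Longrightarrow> \<gamma> \<le> \<gamma>'"
    using primal_minimum_exists[OF assms] by blast
  have "ereal \<gamma> = primal_value \<epsilon> \<Lambda> P0 \<Sigma> P1"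
    unfolding primal_value_def
  proof (rule antisym)
    show "ereal \<gamma> \<le> (INF p\<in>{(X, \<gamma>). primal_feasible \<epsilon> \<Lambda> P0 \<Sigma> P1 X \<gamma>}. ereal (snd p))"
      by (rule INF_greatest) (auto intro: min)
    show "(INF p\<in>{(X, \<gamma>). primal_feasible \<epsilon> \<Lambda> P0 \<Sigma> P1 X \<gamma>}. ereal (snd p)) \<le> ereal \<gamma>"
      by (rule INF_lower2[where i = "(X, \<gamma>)"]) (simp_all add: feasible)
  qed
  with feasible show ?thesis by blast
qed

theorem lemma2:
  fixes \<epsilon> :: real
    and \<Lambda> :: "'a set" and \<Sigma> :: "'b set"
    and P0 :: "'a \<Rightarrow> complex^'n^'n" and P1 :: "'b \<Rightarrow> complex^'n^'n"
  assumes "0 \<le> \<epsilon>" and "\<epsilon> \<le> 1"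
    and "finite \<Lambda>" and "finite \<Sigma>"
    and "\<forall>i\<in>\<Lambda>. psd (P0 i)" and "\<forall>j\<in>\<Sigma>. psd (P1 j)"
  shows "primal_value \<epsilon> \<Lambda> P0 \<Sigma> P1 = dual_value \<epsilon> \<Lambda> P0 \<Sigma> P1 \<and>
    ((\<exists>X \<gamma>. primal_feasible \<epsilon> \<Lambda> P0 \<Sigma> P1 X \<gamma>) \<longrightarrow>
       (\<exists>X \<gamma>. primal_feasible \<epsilon> \<Lambda> P0 \<Sigma> P1 X \<gamma> \<and>
              ereal \<gamma> = primal_value \<epsilon> \<Lambda> P0 \<Sigma> P1))"
proof
  show "primal_value \<epsilon> \<Lambda> P0 \<Sigma> P1 = dual_value \<epsilon> \<Lambda> P0 \<Sigma> P1"
    using primal_value_le_dual_value[OF assms(3-6)] dual_value_le_primal_value by (rule antisym)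
  show "(\<exists>X \<gamma>. primal_feasible \<epsilon> \<Lambda> P0 \<Sigma> P1 X \<gamma>) \<longrightarrow>
       (\<exists>X \<gamma>. primal_feasible \<epsilon> \<Lambda> P0 \<Sigma> P1 X \<gamma> \<and> ereal \<gamma> = primal_value \<epsilon> \<Lambda> P0 \<Sigma> P1)"
    using primal_value_attained by blast
qed

end
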